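(* For every $r\ge\sigma>0$, the distribution $\mathcal{N}(0,\sigma^2I_d)$ has $(r,\frac{\sigma^2}{r},\frac{1}{20})$ margins.
   Context: A distribution $\mathcal{D}$ on $\mathbb{R}^d$ has $(r,\alpha,\gamma)$ margins if for all $\beta\in\mathbb{R}^d\setminus\{0\}$ and all $b\le r\|\beta\|$, with $e\sim\mathcal{D}$, $\Pr[\beta\cdot e>b+\alpha\|\beta\|\mid\beta\cdot e\ge b]\ge\gamma$. *)

theory Defs
  imports "HOL-Probability.Probability"
begin

definition gaussian_iso :: "real \<Rightarrow> ('a::euclidean_space) measure" where
  "gaussian_iso \<sigma> = density lborel (\<lambda>x. ennreal (\<Prod>i\<in>Basis. normal_density 0 \<sigma> (x \<bullet> i)))"

definition has_margins :: "('a::euclidean_space) measure \<Rightarrow> real \<Rightarrow> real \<Rightarrow> real \<Rightarrow> bool" where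
  "has_margins D r \<alpha> \<gamma> \<longleftrightarrow>
     (\<forall>\<beta>::'a. \<beta> \<noteq> 0 \<longrightarrow> (\<forall>b. b \<le> r * norm \<beta> \<longrightarrow>
        cond_prob D (\<lambda>e. \<beta> \<bullet> e > b + \<alpha> * norm \<beta>) (\<lambda>e. \<beta> \<bullet> e \<ge> b) \<ge> \<gamma>))"

end

theory Submission
  imports Defs
begin

text \<open>Projected onto \<beta> and rescaled by \<sigma> norm \<beta>, the isotropic Gaussian becomes a standard
  normal Z, and the margin condition becomes P(Z > t + a | Z \<ge> t) \<ge> 1/20 with a = \<sigma>/r \<le> 1 and
  t a \<le> 1 (from b \<le> r norm \<beta>). For t < 0 the numerator alone is at least P(Z \<ge> 1) \<ge> 1/20.
  Otherwise, translating by a tilts the density by exp(-a y - a^2/2), which gives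
  P(Z \<ge> t + a) \<ge> exp(-a(t+1) - a^2/2) P(t \<le> Z < t + 1) and P(Z \<ge> t + 1) \<le> exp(-t - 1/2) P(Z \<ge> t);
  because t a \<le> 1 the product of the two factors stays above 1/20.\<close>

abbreviation std_normal_mass :: "real set \<Rightarrow> real" where
  "std_normal_mass A \<equiv> \<integral>x. std_normal_density x * indicator A x \<partial>lborel"

lemma integrable_std_normal_indicator:
  "A \<in> sets borel \<Longrightarrow> integrable lborel (\<lambda>x. std_normal_density x * indicator A x)"
  using integrable_mult_indicator[of A lborel std_normal_density] by (simp add: mult.commute)

lemma std_normal_mass_nonneg: "0 \<le> std_normal_mass A"
  by (intro integral_nonneg_AE) (auto simp: indicator_def)

lemma std_normal_mass_mono:
  "A \<subseteq> B \<Longrightarrow> A \<in> sets borel \<Longrightarrow> B \<in> sets borel \<Longrightarrow> std_normal_mass A \<le> std_normal_mass B"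
  by (intro integral_mono integrable_std_normal_indicator) (auto simp: indicator_def)

lemma std_normal_mass_le_1: "A \<in> sets borel \<Longrightarrow> std_normal_mass A \<le> 1"
  using std_normal_mass_mono[of A UNIV] by simp

lemma std_normal_mass_Un:
  assumes "A \<inter> B = {}" "A \<in> sets borel" "B \<in> sets borel"
  shows "std_normal_mass (A \<union> B) = std_normal_mass A + std_normal_mass B"
proof -
  have "std_normal_mass (A \<union> B)
      = (\<integral>x. std_normal_density x * indicator A x + std_normal_density x * indicator B x \<partial>lborel)"
    using assms(1) by (intro Bochner_Integration.integral_cong refl) (auto simp: indicator_def)
  also have "\<dots> = std_normal_mass A + std_normal_mass B"
    using assms(2,3) by (intro Bochner_Integration.integral_add integrable_std_normal_indicator)
  finally show ?thesis .
qed

lemma std_normal_mass_atLeast_split: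
  assumes "a \<le> b"
  shows "std_normal_mass {a..} = std_normal_mass {a..<b} + std_normal_mass {b..}"
proof -
  have "{a..<b} \<union> {b..} = {a..}" "{a..<b} \<inter> {b..} = {}"
    using assms by auto
  then show ?thesis
    using std_normal_mass_Un[of "{a..<b}" "{b..}"] by simp
qed

lemma std_normal_mass_greaterThan: "std_normal_mass {c<..} = std_normal_mass {c..}"
  by (intro integral_cong_AE)
    (auto intro!: eventually_mono[OF AE_lborel_singleton[of c]] simp: indicator_def)

lemma std_normal_mass_atLeast_0: "std_normal_mass {0..} = 1/2"
proof -
  have "std_normal_mass {..<0}
      = (\<integral>y. std_normal_density (0 + (-1) * y) * indicator {..<0} (0 + (-1) * y) \<partial>lborel)"
    using lborel_integral_real_affine[of "-1" "\<lambda>x. std_normal_density x * indicator {..<0} x" 0]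
    by simp
  also have "\<dots> = std_normal_mass {0<..}"
    by (intro Bochner_Integration.integral_cong refl)
      (auto simp: std_normal_density_def indicator_def)
  finally have "std_normal_mass {..<0} = std_normal_mass {0..}"
    by (simp add: std_normal_mass_greaterThan)
  moreover have "{..<0} \<union> {0..} = (UNIV :: real set)" "{..<0} \<inter> {0..} = ({} :: real set)"
    by auto
  ultimately show ?thesis
    using std_normal_mass_Un[of "{..<0}" "{0..}"] by simp
qed

lemma std_normal_mass_atLeast_1: "1/20 \<le> std_normal_mass {1..}"
proof -
  have "std_normal_mass {0..<1} \<le> (\<integral>x. 1 / sqrt (2 * pi) * indicator {0..<1} (x::real) \<partial>lborel)"
  proof (rule integral_mono)
    show "integrable lborel (\<lambda>x::real. 1 / sqrt (2 * pi) * indicator {0..<1} x)"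
      by (intro integrable_mult_right integrable_real_indicator) auto
    show "std_normal_density x * indicator {0..<1} x \<le> 1 / sqrt (2 * pi) * indicator {0..<1} x"
      for x :: real
      by (auto simp: std_normal_density_def indicator_def divide_right_mono)
  qed (auto intro: integrable_std_normal_indicator)
  also have "\<dots> = 1 / sqrt (2 * pi)"
    by simp
  also have "\<dots> \<le> 9/20"
  proof -
    have "(20/9)\<^sup>2 \<le> 2 * pi"
      using pi_gt3 by (simp add: power2_eq_square)
    then have "20/9 \<le> sqrt (2 * pi)"
      using real_le_rsqrt by blast
    then show ?thesis
      by (simp add: field_simps)
  qed
  finally have "std_normal_mass {0..<1} \<le> 9/20" .
  moreover have "std_normal_mass {0..} = std_normal_mass {0..<1} + std_normal_mass {1..}"
    by (rule std_normal_mass_atLeast_split) simp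
  ultimately show ?thesis
    using std_normal_mass_atLeast_0 by simp
qed

lemma std_normal_density_add:
  "std_normal_density (y + a) = std_normal_density y * exp (- a * y - a\<^sup>2 / 2)"
proof -
  have "- (y + a)\<^sup>2 / 2 = - y\<^sup>2 / 2 + (- a * y - a\<^sup>2 / 2)"
    by (simp add: power2_eq_square field_simps)
  then show ?thesis
    unfolding std_normal_density_def by (simp flip: exp_add)
qed

lemma std_normal_mass_atLeast_add:
  "std_normal_mass {c + a..}
    = (\<integral>y. std_normal_density y * exp (- a * y - a\<^sup>2 / 2) * indicator {c..} y \<partial>lborel)"
proof -
  have "std_normal_mass {c + a..}
      = (\<integral>y. std_normal_density (a + 1 * y) * indicator {c + a..} (a + 1 * y) \<partial>lborel)"
    using lborel_integral_real_affine[of 1 "\<lambda>x. std_normal_density x * indicator {c + a..} x" a]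
    by simp
  also have "\<dots> = (\<integral>y. std_normal_density y * exp (- a * y - a\<^sup>2 / 2) * indicator {c..} y \<partial>lborel)"
    by (intro Bochner_Integration.integral_cong refl)
      (auto simp: std_normal_density_add add.commute indicator_def)
  finally show ?thesis .
qed

lemma integrable_std_normal_tilted:
  "integrable lborel (\<lambda>y. std_normal_density y * exp (- a * y - a\<^sup>2 / 2) * indicator {c..} y)"
proof (rule Bochner_Integration.integrable_bound)
  show "integrable lborel (\<lambda>y. std_normal_density (a + 1 * y))"
    by (rule lborel_integrable_real_affine) auto
  show "AE y in lborel. norm (std_normal_density y * exp (- a * y - a\<^sup>2 / 2) * indicator {c..} y)
      \<le> norm (std_normal_density (a + 1 * y))"
    by (auto simp: indicator_def std_normal_density_add add.commute)
qed auto

lemma std_normal_mass_atLeast_add_le: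
  assumes "0 \<le> a"
  shows "std_normal_mass {c + a..} \<le> exp (- a * c - a\<^sup>2 / 2) * std_normal_mass {c..}"
proof -
  have "std_normal_mass {c + a..}
      \<le> (\<integral>y. exp (- a * c - a\<^sup>2 / 2) * (std_normal_density y * indicator {c..} y) \<partial>lborel)"
    unfolding std_normal_mass_atLeast_add
  proof (rule integral_mono)
    show "std_normal_density y * exp (- a * y - a\<^sup>2 / 2) * indicator {c..} y
        \<le> exp (- a * c - a\<^sup>2 / 2) * (std_normal_density y * indicator {c..} y)" for y
      using assms mult_left_mono[of c y a] by (auto simp: indicator_def mult.commute intro!: mult_left_mono)
  qed (intro integrable_std_normal_tilted integrable_mult_right integrable_std_normal_indicator; simp)+
  then show ?thesis
    by simp
qed

lemma std_normal_mass_atLeast_add_ge: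
  assumes "0 \<le> a"
  shows "exp (- a * (c + b) - a\<^sup>2 / 2) * std_normal_mass {c..<c + b} \<le> std_normal_mass {c + a..}"
proof -
  have "exp (- a * (c + b) - a\<^sup>2 / 2) * std_normal_mass {c..<c + b}
      = (\<integral>y. exp (- a * (c + b) - a\<^sup>2 / 2) * (std_normal_density y * indicator {c..<c + b} y) \<partial>lborel)"
    by simp
  also have "\<dots> \<le> std_normal_mass {c + a..}"
    unfolding std_normal_mass_atLeast_add
  proof (rule integral_mono)
    show "exp (- a * (c + b) - a\<^sup>2 / 2) * (std_normal_density y * indicator {c..<c + b} y)
        \<le> std_normal_density y * exp (- a * y - a\<^sup>2 / 2) * indicator {c..} y" for y
      using assms mult_left_mono[of y "c + b" a] by (auto simp: indicator_def mult.commute intro!: mult_left_mono)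
  qed (intro integrable_std_normal_tilted integrable_mult_right integrable_std_normal_indicator; simp)+
  finally show ?thesis .
qed

lemma std_normal_mass_atLeast_shift_ge:
  assumes "0 \<le> a"
  shows "exp (- a * (t + 1) - a\<^sup>2 / 2) * (1 - exp (- t - 1/2)) * std_normal_mass {t..}
    \<le> std_normal_mass {t + a..}"
proof -
  have "std_normal_mass {t..} = std_normal_mass {t..<t + 1} + std_normal_mass {t + 1..}"
    by (rule std_normal_mass_atLeast_split) simp
  moreover have "std_normal_mass {t + 1..} \<le> exp (- t - 1/2) * std_normal_mass {t..}"
    using std_normal_mass_atLeast_add_le[of 1 t] by simp
  ultimately have "(1 - exp (- t - 1/2)) * std_normal_mass {t..} \<le> std_normal_mass {t..<t + 1}"
    by (simp add: algebra_simps)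
  then have "exp (- a * (t + 1) - a\<^sup>2 / 2) * ((1 - exp (- t - 1/2)) * std_normal_mass {t..})
      \<le> exp (- a * (t + 1) - a\<^sup>2 / 2) * std_normal_mass {t..<t + 1}"
    by (rule mult_left_mono) simp
  also have "\<dots> \<le> std_normal_mass {t + a..}"
    by (rule std_normal_mass_atLeast_add_ge[OF assms])
  finally show ?thesis
    by (simp add: mult.assoc)
qed

lemma std_normal_mass_atLeast_pos: "0 < std_normal_mass {t..}"
proof -
  have "std_normal_mass {1..} \<le> exp (- 1/2) * (1/2)"
    using std_normal_mass_atLeast_add_le[of 1 0] by (simp add: std_normal_mass_atLeast_0)
  moreover have "exp (- 1/2 :: real) < 1"
    by simp
  ultimately have "0 < std_normal_mass {0..<1}"
    using std_normal_mass_atLeast_split[OF zero_le_one] std_normal_mass_atLeast_0 by linarith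
  then have "0 < exp (- \<bar>t\<bar> * (0 + 1) - \<bar>t\<bar>\<^sup>2 / 2) * std_normal_mass {0..<0 + 1}"
    by simp
  also have "\<dots> \<le> std_normal_mass {0 + \<bar>t\<bar>..}"
    by (rule std_normal_mass_atLeast_add_ge) simp
  also have "\<dots> \<le> std_normal_mass {t..}"
    by (intro std_normal_mass_mono) auto
  finally show ?thesis .
qed

lemma exp_three_halves_le: "exp (3/2 :: real) \<le> 5"
proof -
  have "exp (3/2 :: real) ^ 2 = exp 1 ^ 3"
    by (simp flip: exp_of_nat_mult exp_add add: power2_eq_square)
  also have "\<dots> \<le> (272/100) ^ 3"
    using e_less_272 by (intro power_mono) auto
  also have "\<dots> \<le> 5 ^ 2"
    by (simp add: power3_eq_cube power2_eq_square)
  finally have "exp (3/2 :: real) ^ 2 \<le> 5 ^ 2" .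
  then show ?thesis by (rule power2_le_imp_le) simp
qed

lemma exp_shift_factor_ge:
  fixes a t :: real
  assumes "0 < a" "a \<le> 1" "0 \<le> t" "t * a \<le> 1"
  shows "1/20 \<le> exp (- a * (t + 1) - a\<^sup>2 / 2) * (1 - exp (- t - 1/2))"
proof -
  txt \<open>Both factors are governed by w = exp(-min t 1 - 1/2) \<in> [1/5, 2/3]: the first is at least
    w/e and the second at least 1 - w.\<close>
  define u where "u = min t 1"
  define w where "w = exp (- u - 1/2)"
  have "a * (t + 1) \<le> u + 1"
    using assms mult_left_le_one_le[of "t + 1" a] by (cases "t \<le> 1") (auto simp: u_def algebra_simps)
  moreover have "a\<^sup>2 \<le> 1"
    using assms by (simp add: power_le_one)
  ultimately have first: "exp (-1) * w \<le> exp (- a * (t + 1) - a\<^sup>2 / 2)"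
    by (simp add: w_def flip: exp_add)
  have second: "exp (- t - 1/2) \<le> w"
    by (simp add: w_def u_def)
  have "1/5 \<le> exp (- 3/2 :: real)"
    using exp_three_halves_le by (simp add: exp_minus field_simps)
  also have "\<dots> \<le> w"
    by (simp add: w_def u_def)
  finally have w_lower: "1/5 \<le> w" .
  have "w \<le> exp (- 1/2)"
    using assms by (simp add: w_def u_def)
  also have "\<dots> \<le> 2/3"
    using exp_ge_add_one_self[of "1/2 :: real"] by (simp add: exp_minus field_simps)
  finally have w_upper: "w \<le> 2/3" .
  have "0 \<le> (w - 1/5) * (4/5 - w)"
    using w_lower w_upper by simp
  also have "\<dots> = w * (1 - w) - 4/25"
    by algebra
  finally have quad: "4/25 \<le> w * (1 - w)"
    by simp
  have "100/272 \<le> exp (-1 :: real)"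
    using e_less_272 by (simp add: exp_minus field_simps)
  from mult_mono[OF this quad] have "1/20 \<le> exp (-1) * (w * (1 - w))"
    by simp
  also have "\<dots> = (exp (-1) * w) * (1 - w)"
    by (simp only: mult.assoc)
  also have "\<dots> \<le> exp (- a * (t + 1) - a\<^sup>2 / 2) * (1 - exp (- t - 1/2))"
    using first second w_upper by (intro mult_mono) auto
  finally show ?thesis .
qed

lemma std_normal_mass_ratio_ge:
  assumes "0 < a" "a \<le> 1" "t * a \<le> 1"
  shows "1/20 \<le> std_normal_mass {t + a<..} / std_normal_mass {t..}"
proof (cases "t < 0")
  case True
  have "1/20 \<le> std_normal_mass {1..}"
    by (rule std_normal_mass_atLeast_1)
  also have "\<dots> \<le> std_normal_mass {t + a<..}"
    using True assms by (intro std_normal_mass_mono) auto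
  also have "\<dots> \<le> std_normal_mass {t + a<..} / std_normal_mass {t..}"
    using std_normal_mass_atLeast_pos[of t] std_normal_mass_le_1[of "{t..}"]
      std_normal_mass_nonneg[of "{t + a<..}"]
    by (simp add: le_divide_eq mult_left_le)
  finally show ?thesis .
next
  case False
  have "1/20 * std_normal_mass {t..}
      \<le> exp (- a * (t + 1) - a\<^sup>2 / 2) * (1 - exp (- t - 1/2)) * std_normal_mass {t..}"
    using False assms exp_shift_factor_ge[of a t] std_normal_mass_nonneg[of "{t..}"]
    by (intro mult_right_mono) auto
  also have "\<dots> \<le> std_normal_mass {t + a<..}"
    using assms std_normal_mass_atLeast_shift_ge[of a t] by (simp add: std_normal_mass_greaterThan)
  finally show ?thesis
    using std_normal_mass_atLeast_pos[of t] by (simp add: le_divide_eq)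
qed

abbreviation normal_measure :: "real \<Rightarrow> real measure" where
  "normal_measure \<sigma> \<equiv> density lborel (\<lambda>x. ennreal (normal_density 0 \<sigma> x))"

lemma density_PiM_prod_eq_PiM_density:
  fixes I :: "'i set" and g :: "real \<Rightarrow> real"
  assumes I: "finite I" and g[measurable]: "g \<in> borel_measurable borel" and g_nonneg: "\<And>x. 0 \<le> g x"
    and prob: "prob_space (density lborel g)"
  shows "density (PiM I (\<lambda>_. lborel)) (\<lambda>f. \<Prod>i\<in>I. g (f i)) = PiM I (\<lambda>_. density lborel g)"
proof -
  interpret D: prob_space "density lborel g"
    by (rule prob)
  interpret PD: product_sigma_finite "\<lambda>_::'i. density lborel g"
    unfolding product_sigma_finite_def by (auto intro: D.sigma_finite_measure)
  interpret PL: product_sigma_finite "\<lambda>_::'i. lborel :: real measure"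
    unfolding product_sigma_finite_def by (auto intro: sigma_finite_lborel)
  show ?thesis
  proof (rule PD.PiM_eqI[OF I])
    fix A assume "\<And>i. i \<in> I \<Longrightarrow> A i \<in> sets (density lborel g)"
    then have A[measurable]: "\<And>i. i \<in> I \<Longrightarrow> A i \<in> sets borel"
      by simp
    have "Pi\<^sub>E I A \<in> sets (PiM I (\<lambda>_. lborel))"
      by (intro sets_PiM_I_finite I) auto
    then have "emeasure (density (PiM I (\<lambda>_. lborel)) (\<lambda>f. \<Prod>i\<in>I. g (f i))) (Pi\<^sub>E I A)
        = (\<integral>\<^sup>+ f. ennreal (\<Prod>i\<in>I. g (f i)) * indicator (Pi\<^sub>E I A) f \<partial>PiM I (\<lambda>_. lborel))"
      by (intro emeasure_density) (measurable, auto simp: I)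
    also have "\<dots> = (\<integral>\<^sup>+ f. (\<Prod>i\<in>I. ennreal (g (f i)) * indicator (A i) (f i)) \<partial>PiM I (\<lambda>_. lborel))"
      using I g_nonneg
      by (intro nn_integral_cong)
        (auto simp: prod_ennreal prod.distrib indicator_def space_PiM PiE_iff prod.neutral)
    also have "\<dots> = (\<Prod>i\<in>I. \<integral>\<^sup>+ x. ennreal (g x) * indicator (A i) x \<partial>lborel)"
      by (rule PL.product_nn_integral_prod[OF I]) auto
    also have "\<dots> = (\<Prod>i\<in>I. emeasure (density lborel g) (A i))"
      by (intro prod.cong refl) (simp add: emeasure_density)
    finally show "emeasure (density (PiM I (\<lambda>_. lborel)) (\<lambda>f. \<Prod>i\<in>I. g (f i))) (Pi\<^sub>E I A)
        = (\<Prod>i\<in>I. emeasure (density lborel g) (A i))" .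
  qed (simp cong: sets_PiM_cong)
qed

definition from_coords :: "('a::euclidean_space \<Rightarrow> real) \<Rightarrow> 'a" where
  "from_coords f = (\<Sum>b\<in>Basis. f b *\<^sub>R b)"

lemma from_coords_inner_Basis: "i \<in> Basis \<Longrightarrow> from_coords f \<bullet> i = f i"
  by (simp add: from_coords_def inner_sum_left inner_Basis if_distrib cong: if_cong)

lemma inner_from_coords: "\<beta> \<bullet> from_coords f = (\<Sum>i\<in>Basis. (\<beta> \<bullet> i) * f i)"
  by (simp add: from_coords_def inner_sum_right mult.commute)

lemma measurable_from_coords[measurable]:
  assumes "sets M = sets (borel :: real measure)"
  shows "from_coords \<in> PiM Basis (\<lambda>_. M) \<rightarrow>\<^sub>M (borel :: 'a::euclidean_space measure)"
proof -
  have "(\<lambda>f. \<Sum>b\<in>Basis. f b *\<^sub>R b) \<in> PiM (Basis :: 'a set) (\<lambda>_. lborel) \<rightarrow>\<^sub>M (borel :: 'a measure)"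
    by measurable
  moreover have "sets (PiM Basis (\<lambda>_. M)) = sets (PiM (Basis :: 'a set) (\<lambda>_. lborel))"
    using assms by (intro sets_PiM_cong) auto
  ultimately show ?thesis
    unfolding from_coords_def by (simp cong: measurable_cong_sets)
qed

abbreviation gaussian_coords :: "real \<Rightarrow> ('a::euclidean_space \<Rightarrow> real) measure" where
  "gaussian_coords \<sigma> \<equiv> PiM Basis (\<lambda>_. normal_measure \<sigma>)"

lemma gaussian_iso_eq_distr_coords:
  assumes "0 < \<sigma>"
  shows "gaussian_iso \<sigma> = distr (gaussian_coords \<sigma>) (borel :: 'a::euclidean_space measure) from_coords"
proof -
  let ?G = "\<lambda>x::'a. ennreal (\<Prod>i\<in>Basis. normal_density 0 \<sigma> (x \<bullet> i))"
  let ?L = "PiM (Basis :: 'a set) (\<lambda>_. lborel :: real measure)"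
  have "gaussian_iso \<sigma> = density (distr ?L borel from_coords) ?G"
    unfolding gaussian_iso_def from_coords_def by (subst lborel_eq) simp
  also have "\<dots> = distr (density ?L (\<lambda>f. ?G (from_coords f))) borel from_coords"
    by (rule density_distr) auto
  also have "density ?L (\<lambda>f. ?G (from_coords f))
      = density ?L (\<lambda>f. \<Prod>i\<in>Basis. normal_density 0 \<sigma> (f i))"
    by (intro density_cong) (auto simp: from_coords_inner_Basis)
  also have "\<dots> = gaussian_coords \<sigma>"
    using assms by (intro density_PiM_prod_eq_PiM_density prob_space_normal_density) auto
  finally show ?thesis .
qed

lemma prob_space_gaussian_coords: "0 < \<sigma> \<Longrightarrow> prob_space (gaussian_coords \<sigma>)"
  by (intro prob_space_PiM prob_space_normal_density)

lemma distr_gaussian_coords_component: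
  assumes "0 < \<sigma>" "i \<in> Basis" "sets M = sets (borel :: real measure)"
  shows "distr (gaussian_coords \<sigma> :: ('a::euclidean_space \<Rightarrow> real) measure) M (\<lambda>f. f i) = normal_measure \<sigma>"
proof -
  have "distr (gaussian_coords \<sigma> :: ('a \<Rightarrow> real) measure) M (\<lambda>f. f i)
      = distr (gaussian_coords \<sigma> :: ('a \<Rightarrow> real) measure) (normal_measure \<sigma>) (\<lambda>f. f i)"
    using assms by (intro distr_cong) auto
  also have "\<dots> = normal_measure \<sigma>"
    using assms by (intro distr_PiM_component prob_space_normal_density)
  finally show ?thesis .
qed

lemma gaussian_coords_component_distributed:
  "0 < \<sigma> \<Longrightarrow> i \<in> Basis \<Longrightarrow>
    distributed (gaussian_coords \<sigma> :: ('a::euclidean_space \<Rightarrow> real) measure) lborel (\<lambda>f. f i)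
      (normal_density 0 \<sigma>)"
  unfolding distributed_def
  by (auto simp: distr_gaussian_coords_component measurable_component_singleton
      cong: measurable_cong_sets)

lemma indep_vars_gaussian_coords:
  assumes "0 < \<sigma>"
  shows "prob_space.indep_vars (gaussian_coords \<sigma> :: ('a::euclidean_space \<Rightarrow> real) measure)
    (\<lambda>_. borel) (\<lambda>i f. f i) Basis"
proof -
  interpret P: prob_space "gaussian_coords \<sigma> :: ('a \<Rightarrow> real) measure"
    using assms by (rule prob_space_gaussian_coords)
  have "distr (gaussian_coords \<sigma>) (PiM Basis (\<lambda>_. borel)) (\<lambda>f. \<lambda>i\<in>Basis. f i)
      = distr (gaussian_coords \<sigma> :: ('a \<Rightarrow> real) measure) (PiM Basis (\<lambda>_. borel)) (\<lambda>f. f)"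
    by (intro distr_cong) (auto simp: space_PiM PiE_def extensional_restrict)
  also have "\<dots> = gaussian_coords \<sigma>"
    by (intro distr_id2 sets_PiM_cong) auto
  also have "\<dots> = PiM Basis (\<lambda>i. distr (gaussian_coords \<sigma> :: ('a \<Rightarrow> real) measure) borel (\<lambda>f. f i))"
    using assms by (intro PiM_cong) (auto simp: distr_gaussian_coords_component)
  finally show ?thesis
    by (subst P.indep_vars_iff_distr_eq_PiM')
      (auto simp: measurable_component_singleton cong: measurable_cong_sets)
qed

lemma sum_Basis_inner_power2: "(\<Sum>i\<in>Basis. (x \<bullet> i)\<^sup>2) = (norm (x :: 'a::euclidean_space))\<^sup>2"
  by (simp add: euclidean_inner[of x x, symmetric] power2_eq_square flip: power2_norm_eq_inner)

lemma gaussian_coords_inner_distributed: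
  fixes \<beta> :: "'a::euclidean_space"
  assumes \<sigma>: "0 < \<sigma>" and \<beta>: "\<beta> \<noteq> 0"
  shows "distributed (gaussian_coords \<sigma> :: ('a \<Rightarrow> real) measure) lborel
    (\<lambda>f. (\<beta> \<bullet> from_coords f) / (\<sigma> * norm \<beta>)) std_normal_density"
proof -
  interpret P: prob_space "gaussian_coords \<sigma> :: ('a \<Rightarrow> real) measure"
    using \<sigma> by (rule prob_space_gaussian_coords)
  define s where "s = \<sigma> * norm \<beta>"
  txt \<open>Only coordinates with a nonzero coefficient are summed: sum_indep_normal needs positive
    standard deviations.\<close>
  define I where "I = {i\<in>Basis. \<beta> \<bullet> i \<noteq> 0}"
  define X where "X = (\<lambda>i (f::'a \<Rightarrow> real). (\<beta> \<bullet> i / s) * f i)"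
  define \<tau> where "\<tau> = (\<lambda>i::'a. \<bar>\<beta> \<bullet> i / s\<bar> * \<sigma>)"
  have s: "0 < s"
    using \<sigma> \<beta> by (simp add: s_def)
  have I: "finite I" "I \<subseteq> Basis" "I \<noteq> {}"
    using \<beta> euclidean_all_zero_iff[of \<beta>] by (auto simp: I_def)
  have indep: "P.indep_vars (\<lambda>_. borel) X I"
    unfolding X_def
    by (rule P.indep_vars_compose2[OF P.indep_vars_subset[OF indep_vars_gaussian_coords[OF \<sigma>] I(2)]])
      auto
  have distr: "distributed (gaussian_coords \<sigma>) lborel (X i) (normal_density 0 (\<tau> i))"
    if "i \<in> I" for i
    using P.normal_density_affine[OF gaussian_coords_component_distributed[OF \<sigma>], of i "\<beta> \<bullet> i / s" 0]
      that \<sigma> s by (simp add: I_def X_def \<tau>_def)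
  have "(\<Sum>i\<in>I. (\<tau> i)\<^sup>2) = (\<Sum>i\<in>Basis. (\<beta> \<bullet> i)\<^sup>2) / (norm \<beta>)\<^sup>2"
    using \<sigma> by (auto simp: sum_divide_distrib \<tau>_def s_def I_def power_divide power_mult_distrib
        intro!: sum.mono_neutral_left)
  then have variance: "(\<Sum>i\<in>I. (\<tau> i)\<^sup>2) = 1"
    using \<beta> by (simp add: sum_Basis_inner_power2)
  have "(\<lambda>f. \<Sum>i\<in>I. X i f) = (\<lambda>f. (\<beta> \<bullet> from_coords f) / s)"
    by (auto simp: X_def I_def inner_from_coords sum_divide_distrib intro!: sum.mono_neutral_left)
  moreover have "\<And>i. i \<in> I \<Longrightarrow> 0 < \<tau> i"
    using \<sigma> s by (auto simp: \<tau>_def I_def)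
  ultimately show ?thesis
    using P.sum_indep_normal[OF I(1,3) indep _ distr] variance by (simp add: s_def)
qed

lemma gaussian_iso_inner_distributed:
  fixes \<beta> :: "'a::euclidean_space"
  assumes "0 < \<sigma>" "\<beta> \<noteq> 0"
  shows "distributed (gaussian_iso \<sigma> :: 'a measure) lborel (\<lambda>e. (\<beta> \<bullet> e) / (\<sigma> * norm \<beta>))
    std_normal_density"
proof -
  have "from_coords \<in> (gaussian_coords \<sigma> :: ('a \<Rightarrow> real) measure) \<rightarrow>\<^sub>M (borel :: 'a measure)"
    by (rule measurable_from_coords) simp
  moreover have "(\<lambda>e::'a. (\<beta> \<bullet> e) / (\<sigma> * norm \<beta>)) \<in> borel \<rightarrow>\<^sub>M lborel"
    by simp
  ultimately show ?thesis
    using gaussian_coords_inner_distributed[OF assms]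
    by (simp add: gaussian_iso_eq_distr_coords[OF assms(1)] distributed_def distr_distr comp_def)
qed

lemma measure_vimage_std_normal:
  assumes "distributed M lborel Y std_normal_density" "A \<in> sets borel"
  shows "measure M (Y -` A \<inter> space M) = std_normal_mass A"
proof -
  have "emeasure M (Y -` A \<inter> space M) = (\<integral>\<^sup>+x. ennreal (std_normal_density x * indicator A x) \<partial>lborel)"
    using distributed_emeasure[OF assms(1)] assms(2) by (simp add: ennreal_mult' ennreal_indicator)
  also have "\<dots> = ennreal (std_normal_mass A)"
    using assms(2)
    by (intro nn_integral_eq_integral integrable_std_normal_indicator) (auto simp: indicator_def)
  finally show ?thesis
    using std_normal_mass_nonneg[of A] by (simp add: measure_def)
qed

lemma cond_prob_gaussian_iso_halfspace:
  fixes \<beta> :: "'a::euclidean_space"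
  assumes "0 < \<sigma>" "\<beta> \<noteq> 0" "0 \<le> c"
  shows "cond_prob (gaussian_iso \<sigma>) (\<lambda>e. \<beta> \<bullet> e > b + c) (\<lambda>e. \<beta> \<bullet> e \<ge> b)
    = std_normal_mass {(b + c) / (\<sigma> * norm \<beta>)<..} / std_normal_mass {b / (\<sigma> * norm \<beta>)..}"
proof -
  let ?Y = "\<lambda>e. (\<beta> \<bullet> e) / (\<sigma> * norm \<beta>)"
  have scale: "0 < \<sigma> * norm \<beta>"
    using assms by simp
  have "{e \<in> space (gaussian_iso \<sigma>). \<beta> \<bullet> e > b + c \<and> \<beta> \<bullet> e \<ge> b}
      = ?Y -` {(b + c) / (\<sigma> * norm \<beta>)<..} \<inter> space (gaussian_iso \<sigma>)"
    "{e \<in> space (gaussian_iso \<sigma>). \<beta> \<bullet> e \<ge> b}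
      = ?Y -` {b / (\<sigma> * norm \<beta>)..} \<inter> space (gaussian_iso \<sigma>)"
    using assms(3) scale by (auto simp: divide_less_cancel divide_le_cancel)
  then show ?thesis
    unfolding cond_prob_def
    by (simp add: measure_vimage_std_normal[OF gaussian_iso_inner_distributed[OF assms(1,2)]])
qed

theorem lemma19:
  fixes r \<sigma> :: real
  assumes "\<sigma> > 0" and "r \<ge> \<sigma>"
  shows "has_margins (gaussian_iso \<sigma> :: ('a::euclidean_space) measure) r (\<sigma>\<^sup>2 / r) (1/20)"
  unfolding has_margins_def
proof (intro allI impI)
  fix \<beta> :: 'a and b :: real
  assume "\<beta> \<noteq> 0" and b: "b \<le> r * norm \<beta>"
  define t where "t = b / (\<sigma> * norm \<beta>)"
  define a where "a = \<sigma> / r"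
  have "0 < a" "a \<le> 1"
    using assms by (auto simp: a_def)
  moreover have "t * a \<le> 1"
    using assms b \<open>\<beta> \<noteq> 0\<close> by (simp add: t_def a_def divide_le_eq mult.commute)
  moreover have "(b + \<sigma>\<^sup>2 / r * norm \<beta>) / (\<sigma> * norm \<beta>) = t + a"
    using assms \<open>\<beta> \<noteq> 0\<close> by (simp add: t_def a_def power2_eq_square field_simps)
  ultimately show "1/20 \<le> cond_prob (gaussian_iso \<sigma>) (\<lambda>e. \<beta> \<bullet> e > b + \<sigma>\<^sup>2 / r * norm \<beta>) (\<lambda>e. \<beta> \<bullet> e \<ge> b)"
    using std_normal_mass_ratio_ge cond_prob_gaussian_iso_halfspace[OF assms(1) \<open>\<beta> \<noteq> 0\<close>, of "\<sigma>\<^sup>2 / r * norm \<beta>" b]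
      assms by (simp add: t_def)
qed

end
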